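(* Let $\Phi$ be a discrete-time LIF-SNN with direct encoding, latency $T\in\mathbb{N}$ and input dimension $n_{\mathrm{in}}$, and let $k$ be an arbitrary neuron of the first hidden layer, with weight row $w_k\in\mathbb{R}^{n_{\mathrm{in}}}$, bias $b_k$, initial potential $u_k(0)$, and with first-layer leak $\beta\in[0,1]$ and threshold $\vartheta>0$. For $x\in\mathbb{R}^{n_{\mathrm{in}}}$ let $(s^1_k(t;x))_{t\in[T]}\in\{0,1\}^T$ be its spike sequence. Then the neuron $k$ partitions $\mathbb{R}^{n_{\mathrm{in}}}$ via parallel hyperplanes (of the form $\{x:\langle w_k,x\rangle+b_k=c\}$, $c\in\mathbb{R}$) into at most $\frac{T^2+T+2}{2}$ regions, on each of which the time series $(s^1_k(t;x))_{t\in[T]}$ is constant and takes a value in $\{0,1\}^T$ different from its values on the other regions. This upper bound is tight: there exist values of $u_k(0)\in\mathbb{R}$, $\beta\in[0,1]$, $\vartheta>0$ such that the number of regions equals $\frac{T^2+T+2}{2}$.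
   Context: In a discrete-time LIF-SNN with direct encoding, the first hidden layer receives the input $x\in\mathbb{R}^{n_{\mathrm{in}}}$ at every time step, and its spikes $s^1(t)\in\{0,1\}^{n_1}$ and membrane potentials $u^1(t)\in\mathbb{R}^{n_1}$ evolve for $t\in[T]$ as $s^1(t)=H(\beta u^1(t-1)+Wx+b-\vartheta\mathbf{1})$, $u^1(t)=\beta u^1(t-1)+Wx+b-\vartheta s^1(t)$, where $W\in\mathbb{R}^{n_1\times n_{\mathrm{in}}}$ (with $k$-th row $w_k$), $b\in\mathbb{R}^{n_1}$, $u^1(0)\in\mathbb{R}^{n_1}$ (with $k$-th entry $u_k(0)$), $\beta\in[0,1]$, $\vartheta>0$, and $H$ is the entrywise Heaviside function ($H(z)=1$ iff $z\ge 0$). *)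

theory Defs
  imports "HOL-Analysis.Analysis"
begin

definition heav :: "real \<Rightarrow> real" where
  "heav z = (if z \<ge> 0 then 1 else 0)"

text \<open>Membrane potentials u^1(t) of the first hidden layer (direct encoding:
  the input x is presented at every time step).\<close>
fun lif_u1 :: "real \<Rightarrow> real \<Rightarrow> real^'n^'m \<Rightarrow> real^'m \<Rightarrow> real^'m \<Rightarrow> real^'n \<Rightarrow> nat \<Rightarrow> real^'m" where
  "lif_u1 \<beta> \<theta> W b u0 x 0 = u0"
| "lif_u1 \<beta> \<theta> W b u0 x (Suc t) =
     (\<chi> k. \<beta> * (lif_u1 \<beta> \<theta> W b u0 x t $ k) + (W *v x) $ k + b $ k - \<theta>
            * heav (\<beta> * (lif_u1 \<beta> \<theta> W b u0 x t $ k) + (W *v x) $ k + b $ k - \<theta>))"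

text \<open>Spikes s^1(t) for t \<ge> 1.\<close>
definition lif_s1 :: "real \<Rightarrow> real \<Rightarrow> real^'n^'m \<Rightarrow> real^'m \<Rightarrow> real^'m \<Rightarrow> real^'n \<Rightarrow> nat \<Rightarrow> real^'m" where
  "lif_s1 \<beta> \<theta> W b u0 x t =
     (\<chi> k. heav (\<beta> * (lif_u1 \<beta> \<theta> W b u0 x (t - 1) $ k) + (W *v x) $ k + b $ k - \<theta>))"

definition spike_train :: "real \<Rightarrow> real \<Rightarrow> real^'n^'m \<Rightarrow> real^'m \<Rightarrow> real^'m \<Rightarrow> nat \<Rightarrow> 'm \<Rightarrow> real^'n \<Rightarrow> real list" where
  "spike_train \<beta> \<theta> W b u0 T k x = map (\<lambda>t. lif_s1 \<beta> \<theta> W b u0 x t $ k) [1..<Suc T]"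

end

theory Submission
  imports Defs
begin

text \<open>Neuron \<open>k\<close> only sees the scalar input \<open>a = \<langle>w\<^sub>k, x\<rangle> + b\<^sub>k\<close>. For \<open>\<beta> \<le> 1\<close> the number
  \<open>N\<^sub>n(a)\<close> of spikes in the first \<open>n\<close> steps is nondecreasing in \<open>a\<close>. The spike train is
  determined by the counts \<open>N\<^sub>1(a), \<dots>, N\<^sub>T(a)\<close>, hence by their nondecreasing sum, which
  takes at most \<open>T(T+1)/2 + 1\<close> values; this gives the bound, and monotonicity makes the
  level sets intervals in \<open>a\<close>. For tightness take \<open>\<beta> = \<theta> = 1\<close> and \<open>u(0) = 1/(T+2)\<close>: then
  \<open>N\<^sub>n(a) = \<lfloor>u(0) + n a\<rfloor>\<close> on \<open>[0, 1)\<close>, and its \<open>T(T+1)/2\<close> jump points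
  \<open>(m - u(0))/n\<close>, \<open>1 \<le> m \<le> n \<le> T\<close>, are pairwise distinct.\<close>

text \<open>Time in \<open>neuron_spike\<close>
  is shifted: \<open>neuron_spike \<beta> \<theta> c a t\<close> is the spike \<open>s\<^sub>k(t + 1)\<close>.\<close>

fun neuron_pot :: "real \<Rightarrow> real \<Rightarrow> real \<Rightarrow> real \<Rightarrow> nat \<Rightarrow> real" where
  "neuron_pot \<beta> \<theta> c a 0 = c"
| "neuron_pot \<beta> \<theta> c a (Suc t) =
     \<beta> * neuron_pot \<beta> \<theta> c a t + a - \<theta> * heav (\<beta> * neuron_pot \<beta> \<theta> c a t + a - \<theta>)"

definition neuron_spike :: "real \<Rightarrow> real \<Rightarrow> real \<Rightarrow> real \<Rightarrow> nat \<Rightarrow> nat" where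
  "neuron_spike \<beta> \<theta> c a t = (if \<beta> * neuron_pot \<beta> \<theta> c a t + a - \<theta> \<ge> 0 then 1 else 0)"

definition spike_count :: "real \<Rightarrow> real \<Rightarrow> real \<Rightarrow> real \<Rightarrow> nat \<Rightarrow> nat" where
  "spike_count \<beta> \<theta> c a n = (\<Sum>t<n. neuron_spike \<beta> \<theta> c a t)"

definition neuron_train :: "real \<Rightarrow> real \<Rightarrow> real \<Rightarrow> nat \<Rightarrow> real \<Rightarrow> real list" where
  "neuron_train \<beta> \<theta> c T a = map (\<lambda>t. real (neuron_spike \<beta> \<theta> c a t)) [0..<T]"

lemma heav_eq_neuron_spike:
  "heav (\<beta> * neuron_pot \<beta> \<theta> c a t + a - \<theta>) = real (neuron_spike \<beta> \<theta> c a t)"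
  by (simp add: heav_def neuron_spike_def)

lemma neuron_pot_Suc:
  "neuron_pot \<beta> \<theta> c a (Suc t) = \<beta> * neuron_pot \<beta> \<theta> c a t + a - \<theta> * real (neuron_spike \<beta> \<theta> c a t)"
  by (simp add: heav_eq_neuron_spike)

declare neuron_pot.simps(2) [simp del]

lemma neuron_spike_le_1: "neuron_spike \<beta> \<theta> c a t \<le> 1"
  by (simp add: neuron_spike_def)

lemma spike_count_0 [simp]: "spike_count \<beta> \<theta> c a 0 = 0"
  by (simp add: spike_count_def)

lemma spike_count_Suc:
  "spike_count \<beta> \<theta> c a (Suc n) = spike_count \<beta> \<theta> c a n + neuron_spike \<beta> \<theta> c a n"
  by (simp add: spike_count_def)

lemma spike_count_le: "spike_count \<beta> \<theta> c a n \<le> n"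
  by (induction n) (simp_all add: spike_count_Suc, metis Suc_eq_plus1 add_mono neuron_spike_le_1)

lemma lif_u1_nth:
  "lif_u1 \<beta> \<theta> W b u0 x t $ k = neuron_pot \<beta> \<theta> (u0 $ k) (W $ k \<bullet> x + b $ k) t"
  by (induction t) (simp_all add: neuron_pot.simps matrix_vector_mul_component add.assoc)

lemma spike_train_eq_neuron_train:
  "spike_train \<beta> \<theta> W b u0 T k x = neuron_train \<beta> \<theta> (u0 $ k) T (W $ k \<bullet> x + b $ k)"
proof -
  have "[1..<Suc T] = map Suc [0..<T]"
    by (simp add: map_Suc_upt)
  then show ?thesis
    by (simp add: spike_train_def neuron_train_def lif_s1_def lif_u1_nth heav_eq_neuron_spike
        matrix_vector_mul_component add.assoc)
qed

lemma neuron_train_eq_iff_spike_count: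
  "neuron_train \<beta> \<theta> c T a = neuron_train \<beta> \<theta> c T a' \<longleftrightarrow>
     (\<forall>n\<le>T. spike_count \<beta> \<theta> c a n = spike_count \<beta> \<theta> c a' n)"
proof
  assume "neuron_train \<beta> \<theta> c T a = neuron_train \<beta> \<theta> c T a'"
  then have "neuron_spike \<beta> \<theta> c a t = neuron_spike \<beta> \<theta> c a' t" if "t < T" for t
    using that by (auto simp: neuron_train_def dest: map_eq_conv[THEN iffD1])
  then show "\<forall>n\<le>T. spike_count \<beta> \<theta> c a n = spike_count \<beta> \<theta> c a' n"
    by (auto simp: spike_count_def intro: sum.cong)
next
  assume counts: "\<forall>n\<le>T. spike_count \<beta> \<theta> c a n = spike_count \<beta> \<theta> c a' n"
  have "neuron_spike \<beta> \<theta> c a t = neuron_spike \<beta> \<theta> c a' t" if "t < T" for t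
    using counts[rule_format, of t] counts[rule_format, of "Suc t"] that
    by (simp add: spike_count_Suc)
  then show "neuron_train \<beta> \<theta> c T a = neuron_train \<beta> \<theta> c T a'"
    by (simp add: neuron_train_def)
qed

text \<open>The reset-free potential \<open>u + \<theta> N\<close> (with \<open>N\<close> the spike count so far) evolves as
  \<open>\<beta> (u + \<theta> N) + a + (1 - \<beta>) \<theta> N\<close>, which is monotone in \<open>a\<close>, \<open>u + \<theta> N\<close> and \<open>N\<close> since
  \<open>\<beta> \<le> 1\<close>. When the counts agree, the potentials themselves are ordered, and so are the next spikes.\<close>

lemma spike_count_mono_reset_free:
  assumes "0 \<le> \<beta>" "\<beta> \<le> 1" "0 \<le> \<theta>" "a \<le> a'"
  shows "spike_count \<beta> \<theta> c a n \<le> spike_count \<beta> \<theta> c a' n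
    \<and> neuron_pot \<beta> \<theta> c a n + \<theta> * spike_count \<beta> \<theta> c a n
      \<le> neuron_pot \<beta> \<theta> c a' n + \<theta> * spike_count \<beta> \<theta> c a' n"
proof (induction n)
  case 0
  then show ?case by simp
next
  case (Suc n)
  define N N' u u' where "N = spike_count \<beta> \<theta> c a n" and "N' = spike_count \<beta> \<theta> c a' n"
    and "u = neuron_pot \<beta> \<theta> c a n" and "u' = neuron_pot \<beta> \<theta> c a' n"
  have IH: "N \<le> N'" "u + \<theta> * N \<le> u' + \<theta> * N'"
    using Suc by (simp_all add: N_def N'_def u_def u'_def)
  have "\<beta> * (u + \<theta> * N) + (1 - \<beta>) * (\<theta> * N) + a \<le> \<beta> * (u' + \<theta> * N') + (1 - \<beta>) * (\<theta> * N') + a'"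
  proof (intro add_mono)
    show "\<beta> * (u + \<theta> * N) \<le> \<beta> * (u' + \<theta> * N')"
      using IH assms by (simp add: mult_left_mono)
    show "(1 - \<beta>) * (\<theta> * N) \<le> (1 - \<beta>) * (\<theta> * N')"
      using IH assms by (simp add: mult_left_mono)
  qed (use assms in simp)
  then have reset_free: "neuron_pot \<beta> \<theta> c a (Suc n) + \<theta> * spike_count \<beta> \<theta> c a (Suc n)
      \<le> neuron_pot \<beta> \<theta> c a' (Suc n) + \<theta> * spike_count \<beta> \<theta> c a' (Suc n)"
    by (simp add: neuron_pot_Suc spike_count_Suc N_def N'_def u_def u'_def algebra_simps)
  have "spike_count \<beta> \<theta> c a (Suc n) \<le> spike_count \<beta> \<theta> c a' (Suc n)"
  proof (cases "N < N'")
    case True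
    then show ?thesis
      using neuron_spike_le_1[of \<beta> \<theta> c a n] by (simp add: spike_count_Suc N_def N'_def)
  next
    case False
    with IH have "N = N'" "\<beta> * u \<le> \<beta> * u'"
      using assms by (simp_all add: mult_left_mono)
    then show ?thesis
      using assms by (simp add: spike_count_Suc neuron_spike_def N_def N'_def u_def u'_def)
  qed
  with reset_free show ?case by simp
qed

lemma spike_count_mono:
  assumes "0 \<le> \<beta>" "\<beta> \<le> 1" "0 \<le> \<theta>" "a \<le> a'"
  shows "spike_count \<beta> \<theta> c a n \<le> spike_count \<beta> \<theta> c a' n"
  using spike_count_mono_reset_free[OF assms] by blast

definition total_spike_count :: "real \<Rightarrow> real \<Rightarrow> real \<Rightarrow> nat \<Rightarrow> real \<Rightarrow> nat" where
  "total_spike_count \<beta> \<theta> c T a = (\<Sum>n\<in>{1..T}. spike_count \<beta> \<theta> c a n)"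

lemma total_spike_count_le: "total_spike_count \<beta> \<theta> c T a \<le> (\<Sum>n\<in>{1..T}. n)"
  unfolding total_spike_count_def by (intro sum_mono spike_count_le)

lemma neuron_train_eq_if_total_spike_count_eq:
  assumes "0 \<le> \<beta>" "\<beta> \<le> 1" "0 \<le> \<theta>"
    and eq: "total_spike_count \<beta> \<theta> c T a = total_spike_count \<beta> \<theta> c T a'"
  shows "neuron_train \<beta> \<theta> c T a = neuron_train \<beta> \<theta> c T a'"
proof -
  have "spike_count \<beta> \<theta> c a n = spike_count \<beta> \<theta> c a' n"
    if "n \<in> {1..T}" "a \<le> a'" "total_spike_count \<beta> \<theta> c T a = total_spike_count \<beta> \<theta> c T a'"
    for n a a'
    using that assms spike_count_mono
    by (intro sum_mono_inv[of "\<lambda>n. spike_count \<beta> \<theta> c a n" "{1..T}"]) (auto simp: total_spike_count_def)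
  then have "spike_count \<beta> \<theta> c a n = spike_count \<beta> \<theta> c a' n" if "n \<in> {1..T}" for n
    using that eq by (metis linear)
  then have "spike_count \<beta> \<theta> c a n = spike_count \<beta> \<theta> c a' n" if "n \<le> T" for n
    using that by (cases "n = 0") auto
  then show ?thesis
    by (simp add: neuron_train_eq_iff_spike_count)
qed

lemma card_range_le_if_factors_through:
  assumes factors: "\<And>x y. g x = g y \<Longrightarrow> f x = f y" and fin: "finite (range g)"
  shows "finite (range f)" and "card (range f) \<le> card (range g)"
proof -
  have "f x = f (inv g (g x))" for x
    by (rule factors) (simp add: f_inv_into_f)
  then have range_f: "range f = (\<lambda>y. f (inv g y)) ` range g"
    by (auto simp: image_iff)
  show "finite (range f)"
    unfolding range_f using fin by simp
  show "card (range f) \<le> card (range g)"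
    unfolding range_f using fin by (rule card_image_le)
qed

lemma card_range_neuron_train_le:
  assumes "0 \<le> \<beta>" "\<beta> \<le> 1" "0 \<le> \<theta>"
  shows "finite (range (neuron_train \<beta> \<theta> c T))"
    and "card (range (neuron_train \<beta> \<theta> c T)) \<le> Suc (\<Sum>n\<in>{1..T}. n)"
proof -
  have sub: "range (total_spike_count \<beta> \<theta> c T) \<subseteq> {..\<Sum>n\<in>{1..T}. n}"
    using total_spike_count_le by auto
  then have fin: "finite (range (total_spike_count \<beta> \<theta> c T))"
    using finite_subset by blast
  note factors = neuron_train_eq_if_total_spike_count_eq[OF assms]
  show "finite (range (neuron_train \<beta> \<theta> c T))"
    by (rule card_range_le_if_factors_through(1)[OF factors fin])
  have "card (range (neuron_train \<beta> \<theta> c T)) \<le> card (range (total_spike_count \<beta> \<theta> c T))"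
    by (rule card_range_le_if_factors_through(2)[OF factors fin])
  also have "\<dots> \<le> Suc (\<Sum>n\<in>{1..T}. n)"
    using card_mono[OF _ sub] by simp
  finally show "card (range (neuron_train \<beta> \<theta> c T)) \<le> Suc (\<Sum>n\<in>{1..T}. n)" .
qed

lemma is_interval_neuron_train_level_set:
  assumes "0 \<le> \<beta>" "\<beta> \<le> 1" "0 \<le> \<theta>"
  shows "is_interval {a. neuron_train \<beta> \<theta> c T a = \<sigma>}"
  unfolding is_interval_1
proof (intro ballI allI impI)
  fix a a' x
  assume "a \<in> {a. neuron_train \<beta> \<theta> c T a = \<sigma>}" "a' \<in> {a. neuron_train \<beta> \<theta> c T a = \<sigma>}"
    and x: "a \<le> x \<and> x \<le> a'"
  then have "spike_count \<beta> \<theta> c a n = spike_count \<beta> \<theta> c a' n" if "n \<le> T" for n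
    using that neuron_train_eq_iff_spike_count by auto
  moreover have "spike_count \<beta> \<theta> c a n \<le> spike_count \<beta> \<theta> c x n"
    "spike_count \<beta> \<theta> c x n \<le> spike_count \<beta> \<theta> c a' n" for n
    using x spike_count_mono[OF assms] by auto
  ultimately have "neuron_train \<beta> \<theta> c T x = neuron_train \<beta> \<theta> c T a"
    unfolding neuron_train_eq_iff_spike_count by (metis antisym)
  with \<open>a \<in> {a. neuron_train \<beta> \<theta> c T a = \<sigma>}\<close>
  show "x \<in> {a. neuron_train \<beta> \<theta> c T a = \<sigma>}" by simp
qed

lemma unit_neuron_pot:
  assumes "0 \<le> c" "c < 1" "0 \<le> a" "a < 1"
  shows "0 \<le> neuron_pot 1 1 c a n \<and> neuron_pot 1 1 c a n < 1
    \<and> neuron_pot 1 1 c a n + spike_count 1 1 c a n = c + real n * a"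
proof (induction n)
  case 0
  then show ?case using assms by simp
next
  case (Suc n)
  then show ?case
    using assms by (auto simp: neuron_pot_Suc spike_count_Suc neuron_spike_def algebra_simps)
qed

lemma unit_spike_count_eq_floor:
  assumes "0 \<le> c" "c < 1" "0 \<le> a" "a < 1"
  shows "int (spike_count 1 1 c a n) = \<lfloor>c + real n * a\<rfloor>"
  using unit_neuron_pot[OF assms, of n] by (intro floor_unique[symmetric]) auto

text \<open>The breakpoint \<open>(m - c)/n\<close> is where \<open>\<lfloor>c + n a\<rfloor>\<close> reaches \<open>m\<close>.
  Equal breakpoints would give \<open>(T + 2) (m n' - m' n) = n' - n\<close>, impossible for
  \<open>0 < |n' - n| < T + 2\<close>.\<close>

lemma inj_on_unit_breakpoints:
  fixes T :: nat
  defines "c \<equiv> 1 / (real T + 2)"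
  shows "inj_on (\<lambda>(n, m). (real m - c) / real n) (SIGMA n:{1..T}. {1..n})"
proof (rule inj_onI)
  fix p p' :: "nat \<times> nat"
  assume "p \<in> (SIGMA n:{1..T}. {1..n})" "p' \<in> (SIGMA n:{1..T}. {1..n})"
    and "(case p of (n, m) \<Rightarrow> (real m - c) / real n) = (case p' of (n, m) \<Rightarrow> (real m - c) / real n)"
  then obtain n m n' m' where p: "p = (n, m)" "p' = (n', m')"
    and n: "1 \<le> m" "m \<le> n" "n \<le> T" and n': "1 \<le> m'" "m' \<le> n'" "n' \<le> T"
    and "(real m - c) / real n = (real m' - c) / real n'"
    by auto
  then have "real m * real n' - real m' * real n = c * (real n' - real n)"
    using n n' by (simp add: field_simps)
  then have "(real T + 2) * (real m * real n' - real m' * real n) = real n' - real n"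
    by (simp add: c_def)
  then have "real_of_int ((int T + 2) * (int m * int n' - int m' * int n)) = real_of_int (int n' - int n)"
    by simp
  then have eq: "(int T + 2) * (int m * int n' - int m' * int n) = int n' - int n"
    by (simp only: of_int_eq_iff)
  have "int m * int n' - int m' * int n = 0"
  proof (rule ccontr)
    assume "int m * int n' - int m' * int n \<noteq> 0"
    then have "int T + 2 \<le> \<bar>(int T + 2) * (int m * int n' - int m' * int n)\<bar>"
      by (simp add: abs_mult)
    moreover have "\<bar>int n' - int n\<bar> \<le> int T"
      using n n' by linarith
    ultimately show False
      using eq by simp
  qed
  with eq n p show "p = p'"
    by simp
qed

lemma card_range_unit_neuron_train_ge:
  fixes T :: nat
  defines "c \<equiv> 1 / (real T + 2)"
  shows "Suc (\<Sum>n\<in>{1..T}. n) \<le> card (range (neuron_train 1 1 c T))"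
proof -
  have c: "0 < c" "c < 1"
    by (simp_all add: c_def field_simps)
  define P where "P = (SIGMA n:{1..T}. {1..n})"
  define B where "B = (\<lambda>(n, m). (real m - c) / real n) ` P"
  have B_bounds: "0 < b \<and> b < 1" if "b \<in> B" for b
    using that c by (auto simp: B_def P_def field_simps)
  have "card B = (\<Sum>n\<in>{1..T}. n)"
    using inj_on_unit_breakpoints[of T] by (simp add: B_def P_def c_def card_image card_SigmaI)
  moreover have "finite B"
    by (simp add: B_def P_def)
  ultimately have card_S: "card (insert 0 B) = Suc (\<Sum>n\<in>{1..T}. n)"
    using B_bounds by (subst card_insert_disjoint) auto
  have "inj_on (neuron_train 1 1 c T) (insert 0 B)"
  proof (rule linorder_inj_onI')
    fix a a' assume "a \<in> insert 0 B" "a' \<in> insert 0 B" "a < a'"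
    then have "a' \<in> B" and a_bounds: "0 \<le> a" "a < 1"
      using B_bounds by fastforce+
    then obtain n m where nm: "1 \<le> m" "m \<le> n" "n \<le> T" and a'_eq: "c + real n * a' = real m"
      by (auto simp: B_def P_def)
    have "real n * a < real n * a'"
      using \<open>a < a'\<close> nm by (intro mult_strict_left_mono) auto
    with a'_eq have "c + real n * a < real m"
      by linarith
    then have "int (spike_count 1 1 c a n) < int m"
      using unit_spike_count_eq_floor[of c a n] a_bounds c by (simp add: floor_less_iff)
    moreover have "int (spike_count 1 1 c a' n) = int m"
      using unit_spike_count_eq_floor[of c a' n] B_bounds[OF \<open>a' \<in> B\<close>] c a'_eq by simp
    ultimately have "spike_count 1 1 c a n < spike_count 1 1 c a' n"
      by simp
    with nm show "neuron_train 1 1 c T a \<noteq> neuron_train 1 1 c T a'"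
      by (auto simp: neuron_train_eq_iff_spike_count)
  qed
  then have "card (insert 0 B) \<le> card (range (neuron_train 1 1 c T))"
    using card_range_neuron_train_le(1)[of 1 1 c T] by (intro card_inj_on_le) auto
  with card_S show ?thesis by simp
qed

lemma range_spike_train:
  "range (spike_train \<beta> \<theta> W b u0 T k) = neuron_train \<beta> \<theta> (u0 $ k) T ` range (\<lambda>x. W $ k \<bullet> x + b $ k)"
  by (auto simp: spike_train_eq_neuron_train image_image)

lemma range_inner_add_const:
  fixes w :: "'a::real_inner"
  assumes "w \<noteq> 0"
  shows "range (\<lambda>x. w \<bullet> x + d) = UNIV"
proof -
  have "a = w \<bullet> (((a - d) / (w \<bullet> w)) *\<^sub>R w) + d" for a
    using assms by simp
  then show ?thesis by blast
qed

lemma card_range_spike_train_le: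
  assumes "0 \<le> \<beta>" "\<beta> \<le> 1" "0 \<le> \<theta>"
  shows "finite (range (spike_train \<beta> \<theta> W b u0 T k))"
    and "card (range (spike_train \<beta> \<theta> W b u0 T k)) \<le> Suc (\<Sum>n\<in>{1..T}. n)"
proof -
  note train_bounds = card_range_neuron_train_le[OF assms, of "u0 $ k" T]
  have sub: "range (spike_train \<beta> \<theta> W b u0 T k) \<subseteq> range (neuron_train \<beta> \<theta> (u0 $ k) T)"
    by (auto simp: range_spike_train)
  show "finite (range (spike_train \<beta> \<theta> W b u0 T k))"
    using train_bounds(1) sub by (rule finite_subset[rotated])
  show "card (range (spike_train \<beta> \<theta> W b u0 T k)) \<le> Suc (\<Sum>n\<in>{1..T}. n)"
    using card_mono[OF train_bounds(1) sub] train_bounds(2) by simp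
qed

lemma spike_train_level_set:
  assumes "0 \<le> \<beta>" "\<beta> \<le> 1" "0 \<le> \<theta>"
  shows "\<exists>I :: real set. is_interval I \<and>
    {x. spike_train \<beta> \<theta> W b u0 T k x = \<sigma>} = {x. W $ k \<bullet> x + b $ k \<in> I}"
  using is_interval_neuron_train_level_set[OF assms]
  by (intro exI[of _ "{a. neuron_train \<beta> \<theta> (u0 $ k) T a = \<sigma>}"]) (simp add: spike_train_eq_neuron_train)

lemma card_range_unit_spike_train:
  assumes "W $ k \<noteq> 0"
  shows "card (range (spike_train 1 1 W b (\<chi> i. 1 / (real T + 2)) T k)) = Suc (\<Sum>n\<in>{1..T}. n)"
proof -
  define c where "c = 1 / (real T + 2)"
  have "range (spike_train 1 1 W b (\<chi> i. c) T k) = range (neuron_train 1 1 c T)"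
    using assms by (simp add: range_spike_train range_inner_add_const)
  moreover have "card (range (neuron_train 1 1 c T)) = Suc (\<Sum>n\<in>{1..T}. n)"
    using card_range_unit_neuron_train_ge[of T] card_range_neuron_train_le(2)[of 1 1 c T]
    unfolding c_def by simp
  ultimately show ?thesis
    by (simp add: c_def)
qed

lemma real_Suc_sum_atLeast1_atMost:
  "real (Suc (\<Sum>n\<in>{1..T}. n)) = (real T ^ 2 + real T + 2) / 2"
  using double_gauss_sum_from_Suc_0[of T, where 'a = real]
  by (simp add: of_nat_sum power2_eq_square field_simps)

theorem lemma4p3:
  fixes W :: "real^'n^'m" and b u0 :: "real^'m" and k :: 'm
    and \<beta> \<theta> :: real and T :: nat
  assumes "0 \<le> \<beta>" and "\<beta> \<le> 1" and "\<theta> > 0"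
  shows "finite (range (spike_train \<beta> \<theta> W b u0 T k))
      \<and> real (card (range (spike_train \<beta> \<theta> W b u0 T k))) \<le> (real T ^ 2 + real T + 2) / 2
      \<and> (\<forall>\<sigma> \<in> range (spike_train \<beta> \<theta> W b u0 T k).
            \<exists>I :: real set. is_interval I \<and>
              {x. spike_train \<beta> \<theta> W b u0 T k x = \<sigma>} = {x. (W $ k) \<bullet> x + b $ k \<in> I})
      \<and> (W $ k \<noteq> 0 \<longrightarrow>
           (\<exists>u0' :: real^'m. \<exists>\<beta>' \<theta>' :: real. 0 \<le> \<beta>' \<and> \<beta>' \<le> 1 \<and> \<theta>' > 0 \<and>
              real (card (range (spike_train \<beta>' \<theta>' W b u0' T k))) = (real T ^ 2 + real T + 2) / 2))"
proof -
  have \<theta>: "0 \<le> \<theta>"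
    using assms(3) by simp
  have "real (card (range (spike_train \<beta> \<theta> W b u0 T k))) \<le> (real T ^ 2 + real T + 2) / 2"
    unfolding real_Suc_sum_atLeast1_atMost[symmetric] of_nat_le_iff
    by (rule card_range_spike_train_le(2)[OF assms(1,2) \<theta>])
  moreover have "W $ k \<noteq> 0 \<longrightarrow>
      real (card (range (spike_train 1 1 W b (\<chi> i. 1 / (real T + 2)) T k))) = (real T ^ 2 + real T + 2) / 2"
    using card_range_unit_spike_train[of W k b T] real_Suc_sum_atLeast1_atMost[of T] by simp
  ultimately show ?thesis
    using card_range_spike_train_le(1)[OF assms(1,2) \<theta>] spike_train_level_set[OF assms(1,2) \<theta>]
    by (metis zero_less_one zero_le_one order_refl)
qed

end
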